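(* Let $Q$ be a multiplicative graph. Every $k$-face of a product $n$-cube of $Q$ is a product $k$-cube of $Q$.
   Context: Graphs are directed graphs $(V\overset{s}{\underset{t}{\leftleftarrows}}A)$, possibly with loops and multiple edges; the Cartesian product $Q_1\,\square\,Q_2$ has vertex set $V_1\times V_2$, arrows $A_1\times V_2\sqcup V_1\times A_2$, source $s_1\times\mathrm{id}\sqcup\mathrm{id}\times s_2$, target $t_1\times\mathrm{id}\sqcup\mathrm{id}\times t_2$; this product is associative up to canonical isomorphism. A multiplicative graph is a graph $Q$ with a morphism $\mu:Q\,\square\,Q\to Q$ such that $\mu\circ(\mu\,\square\,\mathrm{id})=\mu\circ(\mathrm{id}\,\square\,\mu)$; let $\mu_n:Q^{\square n}\to Q$ denote the iterated multiplication. Let $\mathrm{Q}_1$ be the graph with two vertices and one arrow between them, and $\mathrm{Q}_n=\mathrm{Q}_1\,\square\cdots\square\,\mathrm{Q}_1$ ($n$ factors). A $k$-face of $\mathrm{Q}_n$ is the subgraph (isomorphic to $\mathrm{Q}_k$) obtained by replacing $n-k$ of the factors $\mathrm{Q}_1$ by one of its vertices. An $n$-cube of $Q$ is a graph morphism $\mathrm{Q}_n\to Q$, and its $k$-faces are its restrictions to the $k$-faces of $\mathrm{Q}_n$. Each arrow $a$ of $Q$ gives a morphism $a:\mathrm{Q}_1\to Q$. A product $n$-cube is an $n$-cube of the form $\mu_n\circ(a_1\,\square\cdots\square\,a_n):\mathrm{Q}_n\to Q$ for arrows $a_1,\dots,a_n$ of $Q$. *)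

theory Defs
  imports Main
begin

record ('v, 'a) graph =
  verts :: "'v set"
  arcs  :: "'a set"
  src   :: "'a \<Rightarrow> 'v"
  tgt   :: "'a \<Rightarrow> 'v"

definition wf_graph :: "('v, 'a) graph \<Rightarrow> bool" where
  "wf_graph G \<longleftrightarrow> (\<forall>e\<in>arcs G. src G e \<in> verts G \<and> tgt G e \<in> verts G)"

definition graph_hom ::
  "('v1, 'a1) graph \<Rightarrow> ('v2, 'a2) graph \<Rightarrow> ('v1 \<Rightarrow> 'v2) \<Rightarrow> ('a1 \<Rightarrow> 'a2) \<Rightarrow> bool" where
  "graph_hom G H fv fa \<longleftrightarrow>
     (\<forall>x\<in>verts G. fv x \<in> verts H) \<and>
     (\<forall>e\<in>arcs G. fa e \<in> arcs H \<and> src H (fa e) = fv (src G e) \<and> tgt H (fa e) = fv (tgt G e))"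

definition cart_prod ::
  "('v1, 'a1) graph \<Rightarrow> ('v2, 'a2) graph \<Rightarrow> ('v1 \<times> 'v2, ('a1 \<times> 'v2) + ('v1 \<times> 'a2)) graph" where
  "cart_prod G H = \<lparr> verts = verts G \<times> verts H,
     arcs = (arcs G \<times> verts H) <+> (verts G \<times> arcs H),
     src = case_sum (\<lambda>(a, y). (src G a, y)) (\<lambda>(x, b). (x, src H b)),
     tgt = case_sum (\<lambda>(a, y). (tgt G a, y)) (\<lambda>(x, b). (x, tgt H b)) \<rparr>"

text \<open>Product of morphisms f \<box> g (arc map; vertex map is map_prod).\<close>
definition prod_arc_map ::
  "('v1 \<Rightarrow> 'w1) \<Rightarrow> ('a1 \<Rightarrow> 'b1) \<Rightarrow> ('v2 \<Rightarrow> 'w2) \<Rightarrow> ('a2 \<Rightarrow> 'b2)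
   \<Rightarrow> ('a1 \<times> 'v2) + ('v1 \<times> 'a2) \<Rightarrow> ('b1 \<times> 'w2) + ('w1 \<times> 'b2)" where
  "prod_arc_map fv fa gv ga = case_sum (\<lambda>(a, y). Inl (fa a, gv y)) (\<lambda>(x, b). Inr (fv x, ga b))"

definition assoc_v :: "('x \<times> 'y) \<times> 'z \<Rightarrow> 'x \<times> ('y \<times> 'z)" where
  "assoc_v = (\<lambda>((x, y), z). (x, (y, z)))"

definition assoc_a ::
  "((('a1 \<times> 'v2) + ('v1 \<times> 'a2)) \<times> 'v3) + (('v1 \<times> 'v2) \<times> 'a3)
   \<Rightarrow> ('a1 \<times> ('v2 \<times> 'v3)) + ('v1 \<times> (('a2 \<times> 'v3) + ('v2 \<times> 'a3)))" where
  "assoc_a = case_sum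
     (\<lambda>(e, z). case e of Inl (a, y) \<Rightarrow> Inl (a, (y, z)) | Inr (x, b) \<Rightarrow> Inr (x, Inl (b, z)))
     (\<lambda>((x, y), c). Inr (x, Inr (y, c)))"

text \<open>Multiplicative graph: mu : Q \<box> Q \<rightarrow> Q with mu \<circ> (mu \<box> id) = mu \<circ> (id \<box> mu)
  (up to the canonical associator), as equality of maps on the carriers.\<close>
definition multiplicative ::
  "('v, 'a) graph \<Rightarrow> ('v \<times> 'v \<Rightarrow> 'v) \<Rightarrow> (('a \<times> 'v) + ('v \<times> 'a) \<Rightarrow> 'a) \<Rightarrow> bool" where
  "multiplicative Q mv ma \<longleftrightarrow>
     wf_graph Q \<and> graph_hom (cart_prod Q Q) Q mv ma \<and>
     (\<forall>p\<in>verts (cart_prod (cart_prod Q Q) Q).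
        mv (map_prod mv id p) = mv (map_prod id mv (assoc_v p))) \<and>
     (\<forall>e\<in>arcs (cart_prod (cart_prod Q Q) Q).
        ma (prod_arc_map mv ma id id e) = ma (prod_arc_map id id mv ma (assoc_a e)))"

section \<open>Iterated multiplication of cells (vertices Inl, arcs Inr)\<close>

fun cell_mul :: "('v \<times> 'v \<Rightarrow> 'v) \<Rightarrow> (('a \<times> 'v) + ('v \<times> 'a) \<Rightarrow> 'a)
    \<Rightarrow> 'v + 'a \<Rightarrow> 'v + 'a \<Rightarrow> 'v + 'a" where
  "cell_mul mv ma (Inl x) (Inl y) = Inl (mv (x, y))"
| "cell_mul mv ma (Inl x) (Inr b) = Inr (ma (Inr (x, b)))"
| "cell_mul mv ma (Inr a) (Inl y) = Inr (ma (Inl (a, y)))"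
| "cell_mul mv ma (Inr a) (Inr b) = undefined"

text \<open>mu_n, bracketed to the right (any bracketing agrees by associativity).\<close>
fun mu_cells :: "('v \<times> 'v \<Rightarrow> 'v) \<Rightarrow> (('a \<times> 'v) + ('v \<times> 'a) \<Rightarrow> 'a)
    \<Rightarrow> ('v + 'a) list \<Rightarrow> 'v + 'a" where
  "mu_cells mv ma [c] = c"
| "mu_cells mv ma (c # cs) = cell_mul mv ma c (mu_cells mv ma cs)"
| "mu_cells mv ma [] = undefined"

text \<open>Q_n = Q_1 \<box> ... \<box> Q_1 up to canonical isomorphism: vertices are bit strings of
  length n; the arc (i, w) (with w ! i = False) lies in factor i and goes from w to w[i := True].\<close>
definition cube_graph :: "nat \<Rightarrow> (bool list, nat \<times> bool list) graph" where
  "cube_graph n = \<lparr> verts = {w. length w = n},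
     arcs = {(i, w). i < n \<and> length w = n \<and> \<not> w ! i},
     src = (\<lambda>(i, w). w),
     tgt = (\<lambda>(i, w). w[i := True]) \<rparr>"

definition is_cube :: "('v, 'a) graph \<Rightarrow> nat \<Rightarrow> (bool list \<Rightarrow> 'v) \<Rightarrow> (nat \<times> bool list \<Rightarrow> 'a) \<Rightarrow> bool" where
  "is_cube Q n cv ca \<longleftrightarrow> graph_hom (cube_graph n) Q cv ca"

text \<open>mu_n \<circ> (a_1 \<box> ... \<box> a_n) on vertices and arcs of Q_n.\<close>
definition prod_cube_v :: "('v \<times> 'v \<Rightarrow> 'v) \<Rightarrow> (('a \<times> 'v) + ('v \<times> 'a) \<Rightarrow> 'a)
    \<Rightarrow> ('v, 'a) graph \<Rightarrow> 'a list \<Rightarrow> bool list \<Rightarrow> 'v" where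
  "prod_cube_v mv ma Q as w =
     projl (mu_cells mv ma (map (\<lambda>j. Inl (if w ! j then tgt Q (as ! j) else src Q (as ! j)))
                                [0..<length as]))"

definition prod_cube_a :: "('v \<times> 'v \<Rightarrow> 'v) \<Rightarrow> (('a \<times> 'v) + ('v \<times> 'a) \<Rightarrow> 'a)
    \<Rightarrow> ('v, 'a) graph \<Rightarrow> 'a list \<Rightarrow> nat \<times> bool list \<Rightarrow> 'a" where
  "prod_cube_a mv ma Q as e = (case e of (i, w) \<Rightarrow>
     projr (mu_cells mv ma (map (\<lambda>j. if j = i then Inr (as ! j)
                    else Inl (if w ! j then tgt Q (as ! j) else src Q (as ! j)))
                                [0..<length as])))"

definition is_product_cube :: "('v, 'a) graph \<Rightarrow> ('v \<times> 'v \<Rightarrow> 'v) \<Rightarrow> (('a \<times> 'v) + ('v \<times> 'a) \<Rightarrow> 'a)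
    \<Rightarrow> nat \<Rightarrow> (bool list \<Rightarrow> 'v) \<Rightarrow> (nat \<times> bool list \<Rightarrow> 'a) \<Rightarrow> bool" where
  "is_product_cube Q mv ma n cv ca \<longleftrightarrow>
     (\<exists>as. length as = n \<and> set as \<subseteq> arcs Q \<and>
        (\<forall>w\<in>verts (cube_graph n). cv w = prod_cube_v mv ma Q as w) \<and>
        (\<forall>e\<in>arcs (cube_graph n). ca e = prod_cube_a mv ma Q as e))"

text \<open>A face of Q_n is described by a pattern of length n: None marks a free factor,
  Some b marks a factor replaced by vertex b of Q_1. The inclusion Q_k \<rightarrow> Q_n
  (k = number of None's) fills the free positions in increasing order.\<close>
fun face_fill :: "bool option list \<Rightarrow> bool list \<Rightarrow> bool list" where
  "face_fill [] ws = []"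
| "face_fill (None # p) (w # ws) = w # face_fill p ws"
| "face_fill (None # p) [] = undefined # face_fill p []"
| "face_fill (Some b # p) ws = b # face_fill p ws"

definition free_positions :: "bool option list \<Rightarrow> nat list" where
  "free_positions p = filter (\<lambda>j. p ! j = None) [0..<length p]"

definition face_dim :: "bool option list \<Rightarrow> nat" where
  "face_dim p = length (free_positions p)"

definition face_arc :: "bool option list \<Rightarrow> nat \<times> bool list \<Rightarrow> nat \<times> bool list" where
  "face_arc p e = (case e of (i, w) \<Rightarrow> (free_positions p ! i, face_fill p w))"

end

theory Submission
  imports Defs
begin

text \<open>The value of the product cube of \<open>a\<^sub>1, \<dots>, a\<^sub>n\<close> at a cell of \<open>Q\<^sub>n\<close> is the
  product \<open>\<mu>\<^sub>n\<close> of the images of its coordinates under the \<open>a\<^sub>j\<close>.  On a face the fixed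
  coordinates contribute fixed vertices, and by associativity each of them can be multiplied into
  a neighbouring free factor: a vertex \<open>x\<close> followed by the free arc \<open>b\<close> is replaced by the arc
  \<open>x \<cdot> b\<close>, and the vertices after the last free factor are multiplied into it from the right.
  The resulting \<open>k\<close> arcs exhibit the face as a product \<open>k\<close>-cube.\<close>

text \<open>Cells of \<open>Q\<^sub>n\<close> are encoded uniformly as \<open>bool option\<close> lists: \<open>Some b\<close> is a fixed
  coordinate and \<open>None\<close> the direction of an arc.  Then \<open>fill_free p\<close> is the inclusion of the
  face \<open>p\<close> on vertices and arcs at once.\<close>

fun fill_free :: "'x option list \<Rightarrow> 'x option list \<Rightarrow> 'x option list" where
  "fill_free [] c = []"
| "fill_free (None # p) (x # c) = x # fill_free p c"
| "fill_free (None # p) [] = None # fill_free p []"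
| "fill_free (Some b # p) c = Some b # fill_free p c"

lemma free_positions_Nil [simp]: "free_positions [] = []"
  by (simp add: free_positions_def)

lemma free_positions_None [simp]: "free_positions (None # p) = 0 # map Suc (free_positions p)"
  by (simp add: free_positions_def upt_conv_Cons map_Suc_upt[symmetric] filter_map o_def del: upt_Suc)

lemma free_positions_Some [simp]: "free_positions (Some b # p) = map Suc (free_positions p)"
  by (simp add: free_positions_def upt_conv_Cons map_Suc_upt[symmetric] filter_map o_def del: upt_Suc)

lemma face_dim_Nil [simp]: "face_dim [] = 0"
  by (simp add: face_dim_def)

lemma face_dim_None [simp]: "face_dim (None # p) = Suc (face_dim p)"
  by (simp add: face_dim_def)

lemma face_dim_Some [simp]: "face_dim (Some b # p) = face_dim p"
  by (simp add: face_dim_def)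

lemma face_dim_le_length: "face_dim p \<le> length p"
  by (simp add: face_dim_def free_positions_def length_filter_le[THEN order_trans])

lemma free_positions_less_length: "i < face_dim p \<Longrightarrow> free_positions p ! i < length p"
  by (auto simp: face_dim_def free_positions_def dest: nth_mem)

lemma length_face_fill [simp]: "length (face_fill p w) = length p"
  by (induction p w rule: face_fill.induct) auto

lemma length_fill_free [simp]: "length (fill_free p c) = length p"
  by (induction p c rule: fill_free.induct) auto

lemma count_None_fill_free:
  "length c = face_dim p \<Longrightarrow> count_list (fill_free p c) None = count_list c None"
  by (induction p c rule: fill_free.induct) auto

lemma fill_free_map_Some:
  "length w = face_dim p \<Longrightarrow> fill_free p (map Some w) = map Some (face_fill p w)"
  by (induction p w rule: face_fill.induct) auto

lemma fill_free_list_update: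
  "length c = face_dim p \<Longrightarrow> i < face_dim p \<Longrightarrow>
     fill_free p (c[i := x]) = (fill_free p c)[free_positions p ! i := x]"
proof (induction p c arbitrary: i rule: fill_free.induct)
  case (2 p y c)
  then show ?case by (cases i) (auto simp: face_dim_def)
qed (auto simp: face_dim_def)

lemma count_None_update_map_Some: "count_list ((map Some w)[i := None]) None \<le> 1"
  by (induction w arbitrary: i) (auto split: nat.split)

lemma face_fill_free_positions:
  assumes "length w = face_dim p" "i < face_dim p"
  shows "face_fill p w ! (free_positions p ! i) = w ! i"
proof -
  have "(map Some (face_fill p w))[free_positions p ! i := Some (w ! i)] = map Some (face_fill p w)"
    using fill_free_list_update[of "map Some w" p i "Some (w ! i)"] assms
    by (simp add: fill_free_map_Some[symmetric] map_update[symmetric])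
  then have "map Some (face_fill p w) ! (free_positions p ! i) = Some (w ! i)"
    using assms free_positions_less_length[OF assms(2)]
    by (metis length_face_fill length_map list_update_same_conv)
  then show ?thesis
    using assms free_positions_less_length by simp
qed

lemma face_arc_in_arcs:
  assumes "e \<in> arcs (cube_graph (face_dim p))"
  shows "face_arc p e \<in> arcs (cube_graph (length p))"
proof -
  obtain i w where "e = (i, w)" "i < face_dim p" "length w = face_dim p" "\<not> w ! i"
    using assms by (auto simp: cube_graph_def)
  then show ?thesis
    by (simp add: cube_graph_def face_arc_def face_fill_free_positions free_positions_less_length)
qed

definition arc_cell :: "('v, 'a) graph \<Rightarrow> 'a \<Rightarrow> bool option \<Rightarrow> 'v + 'a" where
  "arc_cell Q a x = (case x of None \<Rightarrow> Inr a | Some b \<Rightarrow> Inl (if b then tgt Q a else src Q a))"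

definition arc_cells :: "('v, 'a) graph \<Rightarrow> 'a list \<Rightarrow> bool option list \<Rightarrow> ('v + 'a) list" where
  "arc_cells Q as c = map2 (arc_cell Q) as c"

text \<open>A cell of \<open>Q\<^sup>\<box>\<^sup>n\<close>: at most one coordinate is an arc, which is exactly where
  \<open>cell_mul\<close>, and hence \<open>mu_cells\<close>, is meaningful.\<close>
definition power_cell :: "('v, 'a) graph \<Rightarrow> ('v + 'a) list \<Rightarrow> bool" where
  "power_cell Q cs \<longleftrightarrow> set cs \<subseteq> verts Q <+> arcs Q \<and> count_list (map isl cs) False \<le> 1"

lemma isl_arc_cell [simp]: "isl (arc_cell Q a x) \<longleftrightarrow> x \<noteq> None"
  by (simp add: arc_cell_def split: option.split)

lemma arc_cells_Nil [simp]: "arc_cells Q [] c = []" "arc_cells Q as [] = []"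
  by (simp_all add: arc_cells_def)

lemma arc_cells_Cons [simp]: "arc_cells Q (a # as) (x # c) = arc_cell Q a x # arc_cells Q as c"
  by (simp add: arc_cells_def)

lemma arc_cells_eq_Nil_iff [simp]: "arc_cells Q as c = [] \<longleftrightarrow> as = [] \<or> c = []"
  by (simp add: arc_cells_def)

lemma power_cell_Nil [simp]: "power_cell Q []"
  by (simp add: power_cell_def)

lemma power_cell_Cons:
  "power_cell Q (x # cs) \<longleftrightarrow> x \<in> verts Q <+> arcs Q \<and> power_cell Q cs \<and> (isl x \<or> list_all isl cs)"
  by (auto simp: power_cell_def list_all_iff count_list_0_iff)

lemma mu_cells_Cons: "cs \<noteq> [] \<Longrightarrow> mu_cells mv ma (x # cs) = cell_mul mv ma x (mu_cells mv ma cs)"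
  by (cases cs) auto

lemma list_all_isl_arc_cells: "None \<notin> set c \<Longrightarrow> list_all isl (arc_cells Q as c)"
  by (induction as c rule: list_induct2') (auto simp: arc_cells_def eq_commute[of None])

lemma power_cell_arc_cells:
  assumes "wf_graph Q" "set as \<subseteq> arcs Q" "count_list c None \<le> 1"
  shows "power_cell Q (arc_cells Q as c)"
  using assms(2,3)
proof (induction as c rule: list_induct2')
  case (4 a as x c)
  have "arc_cell Q a x \<in> verts Q <+> arcs Q"
    using assms(1) 4(2) by (auto simp: arc_cell_def wf_graph_def split: option.split)
  with 4 show ?case
    by (auto simp: power_cell_Cons count_list_0_iff list_all_isl_arc_cells split: if_splits)
qed (simp_all add: arc_cells_def)

lemma arc_cells_conv_nth:
  "length c = length as \<Longrightarrow> arc_cells Q as c = map (\<lambda>j. arc_cell Q (as ! j) (c ! j)) [0..<length as]"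
  by (rule nth_equalityI) (simp_all add: arc_cells_def)

lemma prod_cube_v_arc_cells:
  "length w = length as \<Longrightarrow>
     prod_cube_v mv ma Q as w = projl (mu_cells mv ma (arc_cells Q as (map Some w)))"
  unfolding prod_cube_v_def
  by (auto simp: arc_cells_conv_nth arc_cell_def
      intro!: arg_cong[where f = projl] arg_cong[where f = "mu_cells mv ma"])

lemma prod_cube_a_arc_cells:
  "length w = length as \<Longrightarrow>
     prod_cube_a mv ma Q as (i, w) = projr (mu_cells mv ma (arc_cells Q as ((map Some w)[i := None])))"
  unfolding prod_cube_a_def
  by (auto simp: arc_cells_conv_nth arc_cell_def nth_list_update
      intro!: arg_cong[where f = projr] arg_cong[where f = "mu_cells mv ma"])

locale multiplicative_graph =
  fixes Q :: "('v, 'a) graph"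
    and mv :: "'v \<times> 'v \<Rightarrow> 'v"
    and ma :: "('a \<times> 'v) + ('v \<times> 'a) \<Rightarrow> 'a"
  assumes multiplicative: "multiplicative Q mv ma"
begin

lemma graph_wf: "wf_graph Q"
  using multiplicative by (simp add: multiplicative_def)

lemma product_hom: "graph_hom (cart_prod Q Q) Q mv ma"
  using multiplicative by (simp add: multiplicative_def)

lemma mv_closed: "x \<in> verts Q \<Longrightarrow> y \<in> verts Q \<Longrightarrow> mv (x, y) \<in> verts Q"
  using product_hom by (auto simp: graph_hom_def cart_prod_def)

lemma ma_Inl:
  assumes "a \<in> arcs Q" "y \<in> verts Q"
  shows "ma (Inl (a, y)) \<in> arcs Q" "src Q (ma (Inl (a, y))) = mv (src Q a, y)"
    "tgt Q (ma (Inl (a, y))) = mv (tgt Q a, y)"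
  using product_hom assms unfolding graph_hom_def
  by (auto dest!: bspec[where x = "Inl (a, y)"] simp: cart_prod_def)

lemma ma_Inr:
  assumes "x \<in> verts Q" "b \<in> arcs Q"
  shows "ma (Inr (x, b)) \<in> arcs Q" "src Q (ma (Inr (x, b))) = mv (x, src Q b)"
    "tgt Q (ma (Inr (x, b))) = mv (x, tgt Q b)"
  using product_hom assms unfolding graph_hom_def
  by (auto dest!: bspec[where x = "Inr (x, b)"] simp: cart_prod_def)

lemma assoc_vertex:
  "x \<in> verts Q \<Longrightarrow> y \<in> verts Q \<Longrightarrow> z \<in> verts Q \<Longrightarrow> mv (mv (x, y), z) = mv (x, mv (y, z))"
  using multiplicative unfolding multiplicative_def
  by (auto dest!: bspec[where x = "((x, y), z)"] simp: cart_prod_def assoc_v_def)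

lemma assoc_arcs:
  "e \<in> arcs (cart_prod (cart_prod Q Q) Q) \<Longrightarrow>
     ma (prod_arc_map mv ma id id e) = ma (prod_arc_map id id mv ma (assoc_a e))"
  using multiplicative by (simp add: multiplicative_def)

lemma assoc_arc:
  assumes "x \<in> verts Q" "y \<in> verts Q" "a \<in> arcs Q"
  shows "ma (Inl (ma (Inl (a, x)), y)) = ma (Inl (a, mv (x, y)))"
    and "ma (Inl (ma (Inr (x, a)), y)) = ma (Inr (x, ma (Inl (a, y))))"
    and "ma (Inr (mv (x, y), a)) = ma (Inr (x, ma (Inr (y, a))))"
  using assms assoc_arcs[of "Inl (Inl (a, x), y)"] assoc_arcs[of "Inl (Inr (x, a), y)"]
    assoc_arcs[of "Inr ((x, y), a)"]
  by (simp_all add: cart_prod_def assoc_a_def prod_arc_map_def InlI InrI)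

lemma cell_mul_closed:
  assumes "x \<in> verts Q <+> arcs Q" "y \<in> verts Q <+> arcs Q" "isl x \<or> isl y"
  shows "cell_mul mv ma x y \<in> verts Q <+> arcs Q"
    and "isl (cell_mul mv ma x y) \<longleftrightarrow> isl x \<and> isl y"
  using assms by (auto simp: mv_closed ma_Inl ma_Inr)

lemma cell_mul_assoc:
  assumes "power_cell Q [x, y, z]"
  shows "cell_mul mv ma (cell_mul mv ma x y) z = cell_mul mv ma x (cell_mul mv ma y z)"
  using assms
  by (cases x; cases y; cases z)
    (auto simp: power_cell_def assoc_vertex assoc_arc ma_Inl ma_Inr mv_closed)

lemma mu_cells_closed:
  assumes "power_cell Q cs" "cs \<noteq> []"
  shows "mu_cells mv ma cs \<in> verts Q <+> arcs Q \<and> (isl (mu_cells mv ma cs) \<longleftrightarrow> list_all isl cs)"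
  using assms
proof (induction cs)
  case (Cons x cs)
  then show ?case
    by (cases "cs = []") (auto simp: power_cell_Cons mu_cells_Cons cell_mul_closed)
qed simp

lemma mu_cells_merge_head:
  assumes "power_cell Q (x # y # cs)"
  shows "mu_cells mv ma (x # y # cs) = mu_cells mv ma (cell_mul mv ma x y # cs)"
proof (cases "cs = []")
  case False
  then have "power_cell Q [x, y, mu_cells mv ma cs]"
    using assms mu_cells_closed[of cs] by (auto simp: power_cell_Cons list_all_iff)
  with False show ?thesis
    by (simp add: mu_cells_Cons cell_mul_assoc)
qed simp

lemma vertex_mul_arc_cell:
  "v \<in> verts Q \<Longrightarrow> b \<in> arcs Q \<Longrightarrow>
     cell_mul mv ma (Inl v) (arc_cell Q b x) = arc_cell Q (ma (Inr (v, b))) x"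
  by (simp add: arc_cell_def ma_Inr split: option.split)

lemma arc_cell_mul_vertex:
  "a \<in> arcs Q \<Longrightarrow> y \<in> verts Q \<Longrightarrow>
     cell_mul mv ma (arc_cell Q a x) (Inl y) = arc_cell Q (ma (Inl (a, y))) x"
  by (simp add: arc_cell_def ma_Inl split: option.split)

definition face_factors :: "'a list \<Rightarrow> bool option list \<Rightarrow> 'a list \<Rightarrow> bool" where
  "face_factors as p bs \<longleftrightarrow> length bs = face_dim p \<and> set bs \<subseteq> arcs Q \<and>
     (\<forall>c. length c = face_dim p \<longrightarrow> count_list c None \<le> 1 \<longrightarrow>
        mu_cells mv ma (arc_cells Q as (fill_free p c)) = mu_cells mv ma (arc_cells Q bs c))"

lemma face_factors_fixed_head:
  fixes e :: bool
  assumes factors: "face_factors as p (b # bs)" and "length as = length p" "a \<in> arcs Q"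
  defines "x \<equiv> if e then tgt Q a else src Q a"
  shows "face_factors (a # as) (Some e # p) (ma (Inr (x, b)) # bs)"
  unfolding face_factors_def
proof (intro conjI allI impI)
  have x: "x \<in> verts Q" and b: "b \<in> arcs Q"
    using graph_wf factors assms(3) by (auto simp: x_def wf_graph_def face_factors_def)
  then show "set (ma (Inr (x, b)) # bs) \<subseteq> arcs Q"
    using factors by (simp add: face_factors_def ma_Inr)
  show "length (ma (Inr (x, b)) # bs) = face_dim (Some e # p)"
    using factors by (simp add: face_factors_def)
  fix c :: "bool option list"
  assume c: "length c = face_dim (Some e # p)" "count_list c None \<le> 1"
  then obtain y c' where yc: "c = y # c'"
    using factors by (cases c) (auto simp: face_factors_def)
  have "power_cell Q (arc_cells Q (b # bs) c)"
    using c factors by (intro power_cell_arc_cells[OF graph_wf]) (auto simp: face_factors_def)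
  then have power: "power_cell Q (Inl x # arc_cells Q (b # bs) (y # c'))"
    using x yc by (simp add: power_cell_Cons InlI del: arc_cells_Cons)
  have nonempty: "arc_cells Q as (fill_free p c) \<noteq> []"
    using assms(2) c yc face_dim_le_length[of p] by (auto dest: arg_cong[of _ _ length])
  have "mu_cells mv ma (arc_cells Q (a # as) (fill_free (Some e # p) c)) =
      cell_mul mv ma (Inl x) (mu_cells mv ma (arc_cells Q as (fill_free p c)))"
    using nonempty by (simp add: arc_cell_def x_def mu_cells_Cons)
  also have "\<dots> = cell_mul mv ma (Inl x) (mu_cells mv ma (arc_cells Q (b # bs) (y # c')))"
    using factors c yc by (simp add: face_factors_def del: arc_cells_Cons)
  also have "\<dots> = mu_cells mv ma (Inl x # arc_cells Q (b # bs) (y # c'))"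
    by (simp add: mu_cells_Cons del: arc_cells_Cons)
  also have "\<dots> = mu_cells mv ma (cell_mul mv ma (Inl x) (arc_cell Q b y) # arc_cells Q bs c')"
    using mu_cells_merge_head power by simp
  also have "\<dots> = mu_cells mv ma (arc_cells Q (ma (Inr (x, b)) # bs) c)"
    using x b yc by (simp add: vertex_mul_arc_cell)
  finally show "mu_cells mv ma (arc_cells Q (a # as) (fill_free (Some e # p) c)) =
      mu_cells mv ma (arc_cells Q (ma (Inr (x, b)) # bs) c)" .
qed

lemma face_factors_free_head:
  assumes factors: "face_factors as p bs" and "length as = length p" "face_dim p \<noteq> 0" "a \<in> arcs Q"
  shows "face_factors (a # as) (None # p) (a # bs)"
  unfolding face_factors_def
proof (intro conjI allI impI)
  show "length (a # bs) = face_dim (None # p)" "set (a # bs) \<subseteq> arcs Q"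
    using factors assms(4) by (auto simp: face_factors_def)
  fix c :: "bool option list"
  assume c: "length c = face_dim (None # p)" "count_list c None \<le> 1"
  then obtain y c' where yc: "c = y # c'" and c': "length c' = face_dim p" "count_list c' None \<le> 1"
    by (cases c) (auto split: if_splits)
  have "arc_cells Q as (fill_free p c') \<noteq> []" "arc_cells Q bs c' \<noteq> []"
    using assms(2,3) c' factors face_dim_le_length[of p]
    by (auto simp: face_factors_def dest: arg_cong[of _ _ length])
  then show "mu_cells mv ma (arc_cells Q (a # as) (fill_free (None # p) c)) =
      mu_cells mv ma (arc_cells Q (a # bs) c)"
    using factors c' yc by (simp add: face_factors_def mu_cells_Cons)
qed

lemma face_factors_free_last:
  assumes "face_dim p = 0" "length as = length p" "set as \<subseteq> arcs Q" "a \<in> arcs Q"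
  shows "\<exists>b. face_factors (a # as) (None # p) [b]"
proof (cases "as = []")
  case True
  then have "face_factors (a # as) (None # p) [a]"
    using assms by (auto simp: face_factors_def length_Suc_conv)
  then show ?thesis ..
next
  case False
  let ?cs = "arc_cells Q as (fill_free p [])"
  have "None \<notin> set (fill_free p [])"
    using count_None_fill_free[of "[]" p] assms(1) by (simp add: count_list_0_iff)
  then have "power_cell Q ?cs" "list_all isl ?cs" "?cs \<noteq> []"
    using assms False power_cell_arc_cells[OF graph_wf, of as "fill_free p []"]
    by (auto simp: count_list_0_iff list_all_isl_arc_cells dest: arg_cong[of _ _ length])
  then obtain v where v: "v \<in> verts Q" "mu_cells mv ma ?cs = Inl v"
    using mu_cells_closed[of ?cs] by (cases "mu_cells mv ma ?cs") auto
  have "face_factors (a # as) (None # p) [ma (Inl (a, v))]"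
    unfolding face_factors_def
  proof (intro conjI allI impI)
    show "length [ma (Inl (a, v))] = face_dim (None # p)" "set [ma (Inl (a, v))] \<subseteq> arcs Q"
      using assms v by (auto simp: ma_Inl)
    fix c :: "bool option list"
    assume "length c = face_dim (None # p)"
    then obtain y where "c = [y]"
      using assms(1) by (auto simp: length_Suc_conv)
    then show "mu_cells mv ma (arc_cells Q (a # as) (fill_free (None # p) c)) =
        mu_cells mv ma (arc_cells Q [ma (Inl (a, v))] c)"
      using v \<open>?cs \<noteq> []\<close> assms(4) by (simp add: mu_cells_Cons arc_cell_mul_vertex)
  qed
  then show ?thesis ..
qed

lemma face_factors_exist:
  "length as = length p \<Longrightarrow> set as \<subseteq> arcs Q \<Longrightarrow> face_dim p \<noteq> 0 \<Longrightarrow> \<exists>bs. face_factors as p bs"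
proof (induction p arbitrary: as)
  case (Cons q p)
  then obtain a as' where as: "as = a # as'" "a \<in> arcs Q" "set as' \<subseteq> arcs Q" "length as' = length p"
    by (cases as) auto
  show ?case
  proof (cases q)
    case None
    show ?thesis
    proof (cases "face_dim p = 0")
      case True
      then show ?thesis
        using face_factors_free_last as None by blast
    next
      case False
      then show ?thesis
        using Cons.IH as face_factors_free_head None by blast
    qed
  next
    case (Some e)
    then obtain bs where "face_factors as' p bs" "face_dim p \<noteq> 0"
      using Cons as by auto
    moreover from this obtain b bs' where "bs = b # bs'"
      by (cases bs) (auto simp: face_factors_def)
    ultimately show ?thesis
      using face_factors_fixed_head as Some by blast
  qed
qed simp

lemma prod_cube_v_face:
  assumes "face_factors as p bs" "length as = length p" "length w = face_dim p"
  shows "prod_cube_v mv ma Q as (face_fill p w) = prod_cube_v mv ma Q bs w"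
  using assms by (simp add: prod_cube_v_arc_cells face_factors_def fill_free_map_Some[symmetric])

lemma prod_cube_a_face:
  assumes "face_factors as p bs" "length as = length p" "length w = face_dim p" "i < face_dim p"
  shows "prod_cube_a mv ma Q as (face_arc p (i, w)) = prod_cube_a mv ma Q bs (i, w)"
proof -
  have "(map Some (face_fill p w))[free_positions p ! i := None] = fill_free p ((map Some w)[i := None])"
    using assms(3,4) by (simp add: fill_free_list_update fill_free_map_Some)
  then show ?thesis
    using assms count_None_update_map_Some[of w i]
    by (simp add: face_arc_def prod_cube_a_arc_cells face_factors_def)
qed

end

theorem mainTheorem4:
  fixes Q :: "('v, 'a) graph"
    and mv :: "'v \<times> 'v \<Rightarrow> 'v"
    and ma :: "('a \<times> 'v) + ('v \<times> 'a) \<Rightarrow> 'a"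
    and n k :: nat
    and cv :: "bool list \<Rightarrow> 'v" and ca :: "nat \<times> bool list \<Rightarrow> 'a"
    and p :: "bool option list"
  assumes "multiplicative Q mv ma"
    and "is_product_cube Q mv ma n cv ca"
    and "length p = n"
    and "face_dim p = k"
    and "1 \<le> k"
  shows "is_product_cube Q mv ma k (cv \<circ> face_fill p) (ca \<circ> face_arc p)"
proof -
  interpret multiplicative_graph Q mv ma
    using assms(1) by (rule multiplicative_graph.intro)
  obtain as where as: "length as = n" "set as \<subseteq> arcs Q"
    "\<forall>w\<in>verts (cube_graph n). cv w = prod_cube_v mv ma Q as w"
    "\<forall>e\<in>arcs (cube_graph n). ca e = prod_cube_a mv ma Q as e"
    using assms(2) unfolding is_product_cube_def by blast
  obtain bs where bs: "face_factors as p bs"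
    using face_factors_exist as(1,2) assms(3-5) by fastforce
  show ?thesis
    unfolding is_product_cube_def
  proof (intro exI[of _ bs] conjI ballI)
    show "length bs = k" "set bs \<subseteq> arcs Q"
      using bs assms(4) by (auto simp: face_factors_def)
  next
    fix w
    assume "w \<in> verts (cube_graph k)"
    then show "(cv \<circ> face_fill p) w = prod_cube_v mv ma Q bs w"
      using as(1,3) bs assms(3,4) prod_cube_v_face by (simp add: cube_graph_def)
  next
    fix e
    assume e: "e \<in> arcs (cube_graph k)"
    then obtain i w where "e = (i, w)" "i < k" "length w = k"
      by (auto simp: cube_graph_def)
    then show "(ca \<circ> face_arc p) e = prod_cube_a mv ma Q bs e"
      using as(1,4) bs assms(3,4) e face_arc_in_arcs[of e p] prod_cube_a_face by auto
  qed
qed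

end
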